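(* For either choice $\zeta\in\{q,-q^3\}$, the function $\mathcal{F}(\lambda_1,\dots,\lambda_{L-1}\mid v_1,v_2)=\langle\bar0|\mathcal{E}(\lambda_{L-1})\cdots\mathcal{E}(\lambda_1)\mathcal{B}(v_2)\mathcal{B}(v_1)|0\rangle$ can be written as $\mathcal{F}(\lambda_1,\dots,\lambda_{L-1}\mid v_1,v_2)=\omega(y_1)\,\mathcal{H}(\lambda_1,\dots,\lambda_{L-1}\mid v_1,v_2)$ with $y_1=e^{2v_1}$, $\omega(y)=\prod_{j=1}^L(y-e^{2\mu_j}\zeta)$, where $\mathcal{H}$ is a polynomial of degree $L-1$ in $y_1$ and has the same dependence on the other variables as $\mathcal{F}$ (i.e. it is a polynomial of degree $2L-1$ in each $x_i=e^{2\lambda_i}$ and in $y_2=e^{2v_2}$).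
   Context: Let $q\in\mathbb{C}\setminus\{0\}$ (with a fixed choice of $q^{1/2}$) and $\zeta\in\{q,-q^3\}$ ($\zeta=q$: Fateev–Zamolodchikov model; $\zeta=-q^3$: Izergin–Korepin model). For $\lambda\in\mathbb{C}$ put $x=e^{2\lambda}$ and define $a(\lambda)=(x-\zeta)(x-q^2)$, $b(\lambda)=q(x-1)(x-\zeta)$, $c(\lambda)=(1-q^2)(x-\zeta)$, $\bar c(\lambda)=x(1-q^2)(x-\zeta)$, and for $\alpha,\beta\in\{1,2,3\}$, with $\beta'=4-\beta$: $d_{\alpha,\beta}(\lambda)=q(x-1)(x-\zeta)+x(q^2-1)(\zeta-1)$ if $\alpha=\beta=2$; $d_{\alpha,\beta}(\lambda)=(x-1)[(x-\zeta)+x(q^2-1)]$ if $\alpha=\beta\neq 2$; $d_{\alpha,\beta}(\lambda)=(q^2-1)[\zeta(x-1)q^{(\alpha-\beta)/2}-\delta_{\alpha,\beta'}(x-\zeta)]$ if $\alpha<\beta$; $d_{\alpha,\beta}(\lambda)=x(q^2-1)[(x-1)q^{(\alpha-\beta)/2}-\delta_{\alpha,\beta'}(x-\zeta)]$ if $\alpha>\beta$. Let $e_1,e_2,e_3$ be the standard basis of $\mathbb{C}^3$ and $E_{\alpha,\beta}$ the unit matrices. Define $\mathcal{R}(\lambda)\in\mathrm{End}(\mathbb{C}^3\otimes\mathbb{C}^3)$ as the $9\times 9$ matrix in the ordered basis $e_1\otimes e_1,e_1\otimes e_2,e_1\otimes e_3,e_2\otimes e_1,e_2\otimes e_2,e_2\otimes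 e_3,e_3\otimes e_1,e_3\otimes e_2,e_3\otimes e_3$ (indices $1,\dots,9$) whose only nonzero entries (row, column) are: $(1,1)=a$; $(2,2)=b$, $(2,4)=c$; $(3,3)=d_{1,1}$, $(3,5)=d_{1,2}$, $(3,7)=d_{1,3}$; $(4,2)=\bar c$, $(4,4)=b$; $(5,3)=d_{2,1}$, $(5,5)=d_{2,2}$, $(5,7)=d_{2,3}$; $(6,6)=b$, $(6,8)=c$; $(7,3)=d_{3,1}$, $(7,5)=d_{3,2}$, $(7,7)=d_{3,3}$; $(8,6)=\bar c$, $(8,8)=b$; $(9,9)=a$ (all evaluated at $\lambda$). Fix $L\ge1$ and inhomogeneities $\mu_1,\dots,\mu_L\in\mathbb{C}$. With $V_a=V_1=\dots=V_L=\mathbb{C}^3$, let $\mathcal{T}(\lambda)=\mathcal{R}_{a1}(\lambda-\mu_1)\cdots\mathcal{R}_{aL}(\lambda-\mu_L)$, where $\mathcal{R}_{aj}$ acts as $\mathcal{R}$ on $V_a\otimes V_j$. Write $\mathcal{T}(\lambda)=\sum_{\alpha,\beta}E_{\alpha,\beta}\otimes\mathcal{T}_\alpha^\beta(\lambda)$ and set $\mathcal{B}(\lambda)=\mathcal{T}_1^2(\lambda)$, $\mathcal{E}(\lambda)=\mathcal{T}_1^3(\lambda)$, operators on $V_1\otimes\cdots\otimes V_L$. Let $|0\rangle=e_1^{\otimes L}$ and let $\langle\bar0|$ be the dual vector of $e_3^{\otimes L}$. *)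

theory Defs
  imports Complex_Main "HOL-Computational_Algebra.Polynomial"
begin

text \<open>Weights of the R-matrix. Parameters: q, a fixed square root sq of q (sq^2 = q),
  zeta, and x = exp(2 lambda). Indices alpha, beta range over {1,2,3}.\<close>

definition wa :: "complex \<Rightarrow> complex \<Rightarrow> complex \<Rightarrow> complex" where
  "wa q z x = (x - z) * (x - q^2)"
definition wb :: "complex \<Rightarrow> complex \<Rightarrow> complex \<Rightarrow> complex" where
  "wb q z x = q * (x - 1) * (x - z)"
definition wc :: "complex \<Rightarrow> complex \<Rightarrow> complex \<Rightarrow> complex" where
  "wc q z x = (1 - q^2) * (x - z)"
definition wcbar :: "complex \<Rightarrow> complex \<Rightarrow> complex \<Rightarrow> complex" where
  "wcbar q z x = x * (1 - q^2) * (x - z)"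

definition wd :: "complex \<Rightarrow> complex \<Rightarrow> complex \<Rightarrow> nat \<Rightarrow> nat \<Rightarrow> complex \<Rightarrow> complex" where
  "wd q sq z \<alpha> \<beta> x =
    (if \<alpha> = 2 \<and> \<beta> = 2 then q * (x - 1) * (x - z) + x * (q^2 - 1) * (z - 1)
     else if \<alpha> = \<beta> then (x - 1) * ((x - z) + x * (q^2 - 1))
     else if \<alpha> < \<beta> then (q^2 - 1) * (z * (x - 1) * sq powi (int \<alpha> - int \<beta>)
                                   - (if \<alpha> = 4 - \<beta> then 1 else 0) * (x - z))
     else x * (q^2 - 1) * ((x - 1) * sq powi (int \<alpha> - int \<beta>)
                                   - (if \<alpha> = 4 - \<beta> then 1 else 0) * (x - z)))"

definition R9 :: "complex \<Rightarrow> complex \<Rightarrow> complex \<Rightarrow> complex \<Rightarrow> nat \<Rightarrow> nat \<Rightarrow> complex" where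
  "R9 q sq z lm r s =
    (let x = exp (2 * lm) in
     if (r, s) = (1, 1) then wa q z x
     else if (r, s) = (2, 2) then wb q z x
     else if (r, s) = (2, 4) then wc q z x
     else if (r, s) = (3, 3) then wd q sq z 1 1 x
     else if (r, s) = (3, 5) then wd q sq z 1 2 x
     else if (r, s) = (3, 7) then wd q sq z 1 3 x
     else if (r, s) = (4, 2) then wcbar q z x
     else if (r, s) = (4, 4) then wb q z x
     else if (r, s) = (5, 3) then wd q sq z 2 1 x
     else if (r, s) = (5, 5) then wd q sq z 2 2 x
     else if (r, s) = (5, 7) then wd q sq z 2 3 x
     else if (r, s) = (6, 6) then wb q z x
     else if (r, s) = (6, 8) then wc q z x
     else if (r, s) = (7, 3) then wd q sq z 3 1 x
     else if (r, s) = (7, 5) then wd q sq z 3 2 x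
     else if (r, s) = (7, 7) then wd q sq z 3 3 x
     else if (r, s) = (8, 6) then wcbar q z x
     else if (r, s) = (8, 8) then wb q z x
     else if (r, s) = (9, 9) then wa q z x
     else 0)"

text \<open>Matrix element <e_alpha (x) e_i'| R(lambda) |e_gamma (x) e_i>, basis index 3(alpha-1)+i.\<close>
definition Rent :: "complex \<Rightarrow> complex \<Rightarrow> complex \<Rightarrow> complex \<Rightarrow> nat \<Rightarrow> nat \<Rightarrow> nat \<Rightarrow> nat \<Rightarrow> complex" where
  "Rent q sq z lm \<alpha> i' \<gamma> i = R9 q sq z lm (3 * (\<alpha> - 1) + i') (3 * (\<gamma> - 1) + i)"

text \<open>Basis configurations of V_1 (x) ... (x) V_L: lists c of length L with entries in {1,2,3};
  c ! (j-1) is the state of site j.\<close>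
definition cfgs :: "nat \<Rightarrow> nat list set" where
  "cfgs L = {c. length c = L \<and> set c \<subseteq> {1,2,3}}"

text \<open>Auxiliary-space paths alpha = a_0, a_1, ..., a_L = beta.\<close>
definition paths :: "nat \<Rightarrow> nat \<Rightarrow> nat \<Rightarrow> nat list set" where
  "paths L \<alpha> \<beta> = {a. length a = Suc L \<and> set a \<subseteq> {1,2,3} \<and> a ! 0 = \<alpha> \<and> a ! L = \<beta>}"

text \<open>Matrix element <c'| T_alpha^beta(lambda) |c> of the monodromy matrix
  T(lambda) = R_a1(lambda - mu_1) ... R_aL(lambda - mu_L).\<close>
definition Tent :: "complex \<Rightarrow> complex \<Rightarrow> complex \<Rightarrow> (nat \<Rightarrow> complex) \<Rightarrow> nat \<Rightarrow> nat \<Rightarrow> nat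
    \<Rightarrow> complex \<Rightarrow> nat list \<Rightarrow> nat list \<Rightarrow> complex" where
  "Tent q sq z mu L \<alpha> \<beta> lm c' c =
    (\<Sum>a\<in>paths L \<alpha> \<beta>. \<Prod>j<L. Rent q sq z (lm - mu (Suc j)) (a ! j) (c' ! j) (a ! Suc j) (c ! j))"

definition opapp :: "nat \<Rightarrow> (nat list \<Rightarrow> nat list \<Rightarrow> complex) \<Rightarrow> (nat list \<Rightarrow> complex) \<Rightarrow> nat list \<Rightarrow> complex" where
  "opapp L A v = (\<lambda>c'. \<Sum>c\<in>cfgs L. A c' c * v c)"

definition Bop where "Bop q sq z mu L lm = Tent q sq z mu L 1 2 lm"
definition Eop where "Eop q sq z mu L lm = Tent q sq z mu L 1 3 lm"

definition vac :: "nat \<Rightarrow> nat list \<Rightarrow> complex" where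
  "vac L = (\<lambda>c. if c = replicate L 1 then 1 else 0)"

text \<open>F(lambda_1..lambda_{L-1} | v1, v2) = <0bar| E(lambda_{L-1}) ... E(lambda_1) B(v2) B(v1) |0>,
  with lambda_i = lam i for i = 1..L-1.\<close>
definition Ffun :: "complex \<Rightarrow> complex \<Rightarrow> complex \<Rightarrow> (nat \<Rightarrow> complex) \<Rightarrow> nat
    \<Rightarrow> (nat \<Rightarrow> complex) \<Rightarrow> complex \<Rightarrow> complex \<Rightarrow> complex" where
  "Ffun q sq z mu L lam v1 v2 =
    fold (\<lambda>i w. opapp L (Eop q sq z mu L (lam i)) w) [1..<L]
      (opapp L (Bop q sq z mu L v2) (opapp L (Bop q sq z mu L v1) (vac L)))
    (replicate L 3)"

definition omega :: "complex \<Rightarrow> (nat \<Rightarrow> complex) \<Rightarrow> nat \<Rightarrow> complex \<Rightarrow> complex" where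
  "omega z mu L y = (\<Prod>j=1..L. (y - exp (2 * mu j) * z))"

end

theory Submission
  imports Defs
begin

text \<open>Every weight of \<open>R(\<lambda>)\<close> is a polynomial of degree at most 2 in \<open>x = exp (2\<lambda>)\<close>,
  and of degree at most 1 when the auxiliary index strictly increases. A path of auxiliary indices
  from \<open>\<alpha>\<close> to \<open>\<beta> > \<alpha>\<close> increases at least once, so every entry of \<open>T\<^sub>\<alpha>\<^sup>\<beta>(\<lambda>)\<close> with
  \<open>\<alpha> < \<beta>\<close> is a polynomial of degree at most \<open>2L - 1\<close> in \<open>exp (2\<lambda>)\<close>; this gives the degree bounds
  in \<open>y\<^sub>2\<close> and in the \<open>x\<^sub>i\<close>.

  On the vacuum only the columns of \<open>R\<close> belonging to input state \<open>e\<^sub>1\<close> occur. A path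
  \<open>1 \<rightarrow> 2\<close> of \<open>B(v\<^sub>1)\<close> cannot visit 3, since leaving 3 downwards would use a vanishing weight.
  Every weight it does use carries the factor \<open>x - \<zeta>\<close>, and the product of these factors over the
  sites is \<open>\<omega>(y\<^sub>1)\<close> up to a constant. The remaining cofactors are affine in \<open>x\<close> and constant on the
  increasing step, so the quotient has degree at most \<open>L - 1\<close> in \<open>y\<^sub>1\<close>.\<close>

definition exp2_poly :: "nat \<Rightarrow> (complex \<Rightarrow> complex) \<Rightarrow> bool" where
  "exp2_poly d f \<longleftrightarrow> (\<exists>p. degree p \<le> d \<and> (\<forall>t. f t = poly p (exp (2 * t))))"

lemma exp2_poly_const: "exp2_poly d (\<lambda>t. c)"
  unfolding exp2_poly_def by (intro exI[of _ "[:c:]"]) simp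

lemma exp2_poly_add:
  assumes "exp2_poly d f" "exp2_poly d g"
  shows "exp2_poly d (\<lambda>t. f t + g t)"
proof -
  obtain p p' where "degree p \<le> d" "\<forall>t. f t = poly p (exp (2 * t))"
    "degree p' \<le> d" "\<forall>t. g t = poly p' (exp (2 * t))"
    using assms unfolding exp2_poly_def by blast
  then show ?thesis
    unfolding exp2_poly_def by (intro exI[of _ "p + p'"]) (auto intro: order_trans[OF degree_add_le])
qed

lemma exp2_poly_mult:
  assumes "exp2_poly d f" "exp2_poly e g"
  shows "exp2_poly (d + e) (\<lambda>t. f t * g t)"
proof -
  obtain p p' where "degree p \<le> d" "\<forall>t. f t = poly p (exp (2 * t))"
    "degree p' \<le> e" "\<forall>t. g t = poly p' (exp (2 * t))"
    using assms unfolding exp2_poly_def by blast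
  then show ?thesis
    unfolding exp2_poly_def by (intro exI[of _ "p * p'"]) (auto intro: order_trans[OF degree_mult_le])
qed

lemma exp2_poly_cmult: "exp2_poly d f \<Longrightarrow> exp2_poly d (\<lambda>t. c * f t)"
  using exp2_poly_mult[OF exp2_poly_const[of 0 c]] by simp

lemma exp2_poly_multc: "exp2_poly d f \<Longrightarrow> exp2_poly d (\<lambda>t. f t * c)"
  using exp2_poly_mult[OF _ exp2_poly_const[of 0 c]] by simp

lemma exp2_poly_sum:
  assumes "\<And>a. a \<in> A \<Longrightarrow> exp2_poly d (f a)"
  shows "exp2_poly d (\<lambda>t. \<Sum>a\<in>A. f a t)"
proof (cases "finite A")
  case True
  then show ?thesis using assms
    by (induction A rule: finite_induct) (simp_all add: exp2_poly_const exp2_poly_add)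
qed (simp add: exp2_poly_const)

lemma exp2_poly_prod:
  "finite A \<Longrightarrow> (\<And>j. j \<in> A \<Longrightarrow> exp2_poly (d j) (f j)) \<Longrightarrow>
    exp2_poly (\<Sum>j\<in>A. d j) (\<lambda>t. \<Prod>j\<in>A. f j t)"
  by (induction A rule: finite_induct) (simp_all add: exp2_poly_const exp2_poly_mult)

lemma exp2_poly_prod_one_lower:
  assumes "j0 < L" "exp2_poly d (f j0)" "\<And>j. j < L \<Longrightarrow> exp2_poly (Suc d) (f j)"
  shows "exp2_poly (Suc d * L - 1) (\<lambda>t. \<Prod>j<L. f j t)"
proof -
  have "exp2_poly (d + (\<Sum>j\<in>{..<L} - {j0}. Suc d)) (\<lambda>t. f j0 t * (\<Prod>j\<in>{..<L} - {j0}. f j t))"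
    using assms by (intro exp2_poly_mult exp2_poly_prod) auto
  moreover have "d + (\<Sum>j\<in>{..<L} - {j0}. Suc d) = Suc d * L - 1"
    using assms(1) by (cases L) auto
  ultimately show ?thesis
    using assms(1) by (simp add: prod.remove)
qed

lemma exp2_poly_shift:
  assumes "\<And>x. f x = poly p x" "degree p \<le> d"
  shows "exp2_poly d (\<lambda>t. f (exp (2 * (t - m))))"
  unfolding exp2_poly_def
proof (intro exI[of _ "p \<circ>\<^sub>p [:0, exp (- (2 * m)):]"] conjI allI)
  show "degree (p \<circ>\<^sub>p [:0, exp (- (2 * m)):]) \<le> d"
    using assms(2) by (simp add: degree_pcompose)
  have "exp (2 * (t - m)) = exp (- (2 * m)) * exp (2 * t)" for t
    by (simp add: algebra_simps flip: exp_add)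
  then show "f (exp (2 * (t - m))) = poly (p \<circ>\<^sub>p [:0, exp (- (2 * m)):]) (exp (2 * t))" for t
    by (simp add: poly_pcompose assms(1) mult.commute)
qed

lemma climbing_step:
  fixes a :: "nat list"
  assumes "a ! 0 < a ! L"
  obtains j where "j < L" "a ! j < a ! Suc j"
proof -
  have "\<exists>j<L. a ! j < a ! Suc j"
  proof (rule ccontr)
    assume "\<not> (\<exists>j<L. a ! j < a ! Suc j)"
    then have step: "a ! Suc j \<le> a ! j" if "j < L" for j
      using that not_less by blast
    have "a ! n \<le> a ! 0" if "n \<le> L" for n
      using that
    proof (induction n)
      case (Suc n)
      then show ?case using step[of n] by simp
    qed simp
    with assms show False
      by (meson le_refl not_le)
  qed
  with that show ?thesis by blast
qed

lemma leaving_step: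
  assumes "a ! j = k" "j \<le> L" "a ! L \<noteq> k"
  obtains m where "j \<le> m" "m < L" "a ! m = k" "a ! Suc m \<noteq> k"
proof -
  have "\<exists>m. j \<le> m \<and> m < L \<and> a ! m = k \<and> a ! Suc m \<noteq> k"
  proof (rule ccontr)
    assume "\<nexists>m. j \<le> m \<and> m < L \<and> a ! m = k \<and> a ! Suc m \<noteq> k"
    then have "a ! (j + n) = k" if "j + n \<le> L" for n
      using that assms(1) by (induction n) auto
    from this[of "L - j"] assms show False
      by simp
  qed
  with that show ?thesis by blast
qed

lemma cfgs_finite: "finite (cfgs L)"
proof -
  have "cfgs L = {xs. set xs \<subseteq> {1,2,3::nat} \<and> length xs = L}"
    unfolding cfgs_def by auto
  then show ?thesis
    using finite_lists_length_eq[of "{1,2,3::nat}" L] by simp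
qed

lemma cfgs_nth: "c \<in> cfgs L \<Longrightarrow> j < L \<Longrightarrow> c ! j \<in> {1,2,3}"
  unfolding cfgs_def by (auto dest!: nth_mem)

lemma paths_nth:
  assumes "a \<in> paths L \<alpha> \<beta>" "j \<le> L"
  shows "a ! j \<in> {1,2,3}"
proof -
  have "j < length a" "set a \<subseteq> {1,2,3}"
    using assms unfolding paths_def by auto
  then show ?thesis
    using nth_mem by blast
qed

lemma replicate_in_cfgs: "k \<in> {1,2,3} \<Longrightarrow> replicate L k \<in> cfgs L"
  unfolding cfgs_def by auto

definition R9x :: "complex \<Rightarrow> complex \<Rightarrow> complex \<Rightarrow> complex \<Rightarrow> nat \<Rightarrow> nat \<Rightarrow> complex" where
  "R9x q sq z x r s =
    (if (r, s) = (1, 1) then wa q z x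
     else if (r, s) = (2, 2) then wb q z x
     else if (r, s) = (2, 4) then wc q z x
     else if (r, s) = (3, 3) then wd q sq z 1 1 x
     else if (r, s) = (3, 5) then wd q sq z 1 2 x
     else if (r, s) = (3, 7) then wd q sq z 1 3 x
     else if (r, s) = (4, 2) then wcbar q z x
     else if (r, s) = (4, 4) then wb q z x
     else if (r, s) = (5, 3) then wd q sq z 2 1 x
     else if (r, s) = (5, 5) then wd q sq z 2 2 x
     else if (r, s) = (5, 7) then wd q sq z 2 3 x
     else if (r, s) = (6, 6) then wb q z x
     else if (r, s) = (6, 8) then wc q z x
     else if (r, s) = (7, 3) then wd q sq z 3 1 x
     else if (r, s) = (7, 5) then wd q sq z 3 2 x
     else if (r, s) = (7, 7) then wd q sq z 3 3 x
     else if (r, s) = (8, 6) then wcbar q z x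
     else if (r, s) = (8, 8) then wb q z x
     else if (r, s) = (9, 9) then wa q z x
     else 0)"

lemma R9_eq_R9x: "R9 q sq z lm r s = R9x q sq z (exp (2 * lm)) r s"
  unfolding R9_def R9x_def Let_def by simp

text \<open>A quadratic function is recovered from its values at \<open>-1, 0, 1\<close>; phrasing this as
  an identity lets ring normalisation decide membership without exhibiting coefficients.\<close>

definition quadratic_fun :: "(complex \<Rightarrow> complex) \<Rightarrow> bool" where
  "quadratic_fun f \<longleftrightarrow>
    (\<forall>x. 2 * f x = 2 * f 0 + (f 1 - f (-1)) * x + (f 1 + f (-1) - 2 * f 0) * x^2)"

definition quad_interp :: "(complex \<Rightarrow> complex) \<Rightarrow> complex poly" where
  "quad_interp f = [:f 0, (f 1 - f (-1)) / 2, (f 1 + f (-1) - 2 * f 0) / 2:]"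

lemma quadratic_fun_eq_poly:
  assumes "quadratic_fun f"
  shows "f x = poly (quad_interp f) x"
proof -
  have "2 * f x = 2 * f 0 + (f 1 - f (-1)) * x + (f 1 + f (-1) - 2 * f 0) * x^2"
    using assms unfolding quadratic_fun_def by (rule spec)
  also have "\<dots> = 2 * poly (quad_interp f) x"
    unfolding quad_interp_def by (simp add: field_simps power2_eq_square)
  finally show ?thesis by simp
qed

lemma degree_quad_interp: "degree (quad_interp f) \<le> 2"
  unfolding quad_interp_def by simp

definition zero_second_difference :: "(complex \<Rightarrow> complex) \<Rightarrow> bool" where
  "zero_second_difference f \<longleftrightarrow> f 1 + f (-1) = 2 * f 0"

lemma zero_second_difference_if:
  "(c \<Longrightarrow> zero_second_difference f) \<Longrightarrow> (\<not> c \<Longrightarrow> zero_second_difference g) \<Longrightarrow>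
    zero_second_difference (\<lambda>x. if c then f x else g x)"
  by (cases c) auto

lemma degree_quad_interp_affine:
  "zero_second_difference f \<Longrightarrow> degree (quad_interp f) \<le> 1"
  unfolding quad_interp_def zero_second_difference_def by simp

lemma quadratic_fun_if:
  "quadratic_fun f \<Longrightarrow> quadratic_fun g \<Longrightarrow> quadratic_fun (\<lambda>x. if c then f x else g x)"
  by (cases c) auto

lemma quadratic_fun_R9x: "quadratic_fun (\<lambda>x. R9x q sq z x r s)"
proof -
  have weights: "quadratic_fun (\<lambda>x. wa q z x)" "quadratic_fun (\<lambda>x. wb q z x)"
    "quadratic_fun (\<lambda>x. wc q z x)" "quadratic_fun (\<lambda>x. wcbar q z x)" "quadratic_fun (\<lambda>x. 0)"
    unfolding quadratic_fun_def wa_def wb_def wc_def wcbar_def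
    by (simp_all add: algebra_simps power2_eq_square)
  have wd: "quadratic_fun (\<lambda>x. wd q sq z \<alpha> \<beta> x)" for \<alpha> \<beta>
    unfolding quadratic_fun_def wd_def
    by (cases "\<alpha> = 2 \<and> \<beta> = 2"; cases "\<alpha> = \<beta>"; cases "\<alpha> < \<beta>")
      (auto simp: algebra_simps power2_eq_square)
  show ?thesis
    unfolding R9x_def by (intro quadratic_fun_if weights wd)
qed

text \<open>Row block \<open>(r - 1) div 3\<close> and column block \<open>(s - 1) div 3\<close> are the auxiliary-space
  indices before and after the step.\<close>

lemma R9x_affine_above_block_diagonal:
  assumes "(r - 1) div 3 < (s - 1) div (3::nat)"
  shows "zero_second_difference (\<lambda>x. R9x q sq z x r s)"
  using assms unfolding R9x_def
  by (intro zero_second_difference_if)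
    (auto simp: zero_second_difference_def wc_def wd_def algebra_simps)

lemma Rent_exp2_poly: "exp2_poly 2 (\<lambda>t. Rent q sq z (t - m) \<alpha> i' \<gamma> i)"
  unfolding Rent_def R9_eq_R9x
  by (rule exp2_poly_shift[OF quadratic_fun_eq_poly[OF quadratic_fun_R9x] degree_quad_interp])

lemma Rent_exp2_poly_climbing:
  assumes "\<alpha> \<in> {1,2,3}" "\<gamma> \<in> {1,2,3}" "i \<in> {1,2,3}" "i' \<in> {1,2,3}" "\<alpha> < \<gamma>"
  shows "exp2_poly 1 (\<lambda>t. Rent q sq z (t - m) \<alpha> i' \<gamma> i)"
proof -
  have "(3 * (\<alpha> - 1) + i' - 1) div 3 < (3 * (\<gamma> - 1) + i - 1) div 3"
    using assms by auto
  then show ?thesis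
    unfolding Rent_def R9_eq_R9x
    by (intro exp2_poly_shift[OF quadratic_fun_eq_poly[OF quadratic_fun_R9x]]
        degree_quad_interp_affine R9x_affine_above_block_diagonal)
qed

lemma Tent_exp2_poly:
  assumes "\<alpha> < \<beta>" "c \<in> cfgs L" "c' \<in> cfgs L"
  shows "exp2_poly (2 * L - 1) (\<lambda>t. Tent q sq z mu L \<alpha> \<beta> t c' c)"
  unfolding Tent_def
proof (intro exp2_poly_sum)
  fix a assume a: "a \<in> paths L \<alpha> \<beta>"
  then have "a ! 0 < a ! L"
    using assms(1) by (simp add: paths_def)
  then obtain j0 where j0: "j0 < L" "a ! j0 < a ! Suc j0"
    by (rule climbing_step)
  let ?R = "\<lambda>j t. Rent q sq z (t - mu (Suc j)) (a ! j) (c' ! j) (a ! Suc j) (c ! j)"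
  have "exp2_poly 1 (?R j0)"
    using j0 a assms by (intro Rent_exp2_poly_climbing paths_nth cfgs_nth) auto
  moreover have "exp2_poly (Suc 1) (?R j)" for j
    using Rent_exp2_poly by (simp flip: numeral_2_eq_2)
  ultimately have "exp2_poly (Suc 1 * L - 1) (\<lambda>t. \<Prod>j<L. ?R j t)"
    by (intro exp2_poly_prod_one_lower[OF j0(1)])
  then show "exp2_poly (2 * L - 1) (\<lambda>t. \<Prod>j<L. ?R j t)"
    by (simp add: mult_2)
qed

text \<open>On the vacuum every site is in state \<open>e\<^sub>1\<close>, so only columns 1, 4, 7 of \<open>R\<close> occur.
  Columns 1 and 4 carry the factor \<open>x - \<zeta>\<close>; \<open>Rquot\<close> is the cofactor.\<close>

definition Rquot :: "complex \<Rightarrow> nat \<Rightarrow> nat \<Rightarrow> complex poly" where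
  "Rquot q r s =
    (if (r, s) = (1, 1) then [:- (q^2), 1:]
     else if (r, s) = (2, 4) then [:1 - q^2:]
     else if (r, s) = (4, 4) then [:- q, q:]
     else 0)"

lemma R9x_eq_Rquot: "s \<in> {1, 4} \<Longrightarrow> R9x q sq z x r s = (x - z) * poly (Rquot q r s) x"
  by (elim insertE emptyE)
    (simp_all add: R9x_def Rquot_def wa_def wb_def wc_def right_diff_distrib ac_simps)

lemma R9x_lower_rows_vac_columns: "r \<in> {7, 8, 9} \<Longrightarrow> s \<in> {1, 4} \<Longrightarrow> R9x q sq z x r s = 0"
  by (elim insertE emptyE) (simp_all add: R9x_def)

lemma Rquot_lower_rows: "r \<in> {7, 8, 9} \<Longrightarrow> Rquot q r s = 0"
  by (elim insertE emptyE) (simp_all add: Rquot_def)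

lemma degree_Rquot: "degree (Rquot q r s) \<le> 1"
  unfolding Rquot_def by simp

lemma degree_Rquot_climbing:
  assumes "\<alpha> \<in> {1,2,3}" "\<gamma> \<in> {1,2,3}" "i' \<in> {1,2,3}" "\<alpha> < \<gamma>"
  shows "degree (Rquot q (3 * (\<alpha> - 1) + i') (3 * (\<gamma> - 1) + 1)) = 0"
  using assms unfolding Rquot_def by auto

text \<open>Leaving 3 downwards uses an entry in rows 7--9 and column 1 or 4, which vanishes.\<close>

lemma prod_R9x_vac_path:
  assumes a: "a \<in> paths L 1 2" and c': "c' \<in> cfgs L"
  shows "(\<Prod>j<L. R9x q sq z (X j) (3 * (a ! j - 1) + c' ! j) (3 * (a ! Suc j - 1) + 1))
     = (\<Prod>j<L. X j - z) *
       (\<Prod>j<L. poly (Rquot q (3 * (a ! j - 1) + c' ! j) (3 * (a ! Suc j - 1) + 1)) (X j))"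
    (is "(\<Prod>j<L. R9x q sq z (X j) (?r j) (?s j)) = _")
proof (cases "\<exists>j<L. a ! Suc j = 3")
  case False
  have "?s j \<in> {1, 4}" if "j < L" for j
    using paths_nth[OF a, of "Suc j"] False that by auto
  then show ?thesis
    by (simp add: R9x_eq_Rquot flip: prod.distrib)
next
  case True
  then obtain j where j: "j < L" "a ! Suc j = 3" by blast
  moreover have "a ! L \<noteq> 3" using a by (simp add: paths_def)
  ultimately obtain m where m: "m < L" "a ! m = 3" "a ! Suc m \<noteq> 3"
    by (metis Suc_leI leaving_step)
  have "?r m \<in> {7, 8, 9}"
    using m cfgs_nth[OF c' m(1)] by auto
  moreover have "?s m \<in> {1, 4}"
    using paths_nth[OF a, of "Suc m"] m by auto
  ultimately have "R9x q sq z (X m) (?r m) (?s m) = 0" "poly (Rquot q (?r m) (?s m)) (X m) = 0"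
    by (simp_all add: R9x_lower_rows_vac_columns Rquot_lower_rows)
  then show ?thesis
    using m(1) by (metis (no_types, lifting) finite_lessThan lessThan_iff mult_zero_right prod_zero_iff)
qed

lemma prod_exp_shift_diff:
  "(\<Prod>j<L. exp (2 * (v - mu (Suc j))) - z) =
    (\<Prod>j<L. exp (- (2 * mu (Suc j)))) * omega z mu L (exp (2 * v))"
proof -
  have shift: "exp (2 * (v - m)) - z = exp (- (2 * m)) * (exp (2 * v) - exp (2 * m) * z)" for m
    by (simp add: exp_diff exp_minus right_diff_distrib field_simps)
  show ?thesis
    unfolding omega_def shift prod.distrib by (simp add: prod.atLeast1_atMost_eq)
qed

definition Bvac_quot ::
    "complex \<Rightarrow> complex \<Rightarrow> (nat \<Rightarrow> complex) \<Rightarrow> nat \<Rightarrow> complex \<Rightarrow> nat list \<Rightarrow> complex" where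
  "Bvac_quot q z mu L v c' = (\<Prod>j<L. exp (- (2 * mu (Suc j)))) *
     (\<Sum>a\<in>paths L 1 2. \<Prod>j<L.
        poly (Rquot q (3 * (a ! j - 1) + c' ! j) (3 * (a ! Suc j - 1) + 1)) (exp (2 * (v - mu (Suc j)))))"

lemma Bop_vac:
  assumes c': "c' \<in> cfgs L"
  shows "opapp L (Bop q sq z mu L v) (vac L) c' =
    omega z mu L (exp (2 * v)) * Bvac_quot q z mu L v c'"
proof -
  let ?X = "\<lambda>j. exp (2 * (v - mu (Suc j)))"
  have "opapp L (Bop q sq z mu L v) (vac L) c' = Tent q sq z mu L 1 2 v c' (replicate L 1)"
    using cfgs_finite replicate_in_cfgs[of 1 L]
    unfolding opapp_def vac_def Bop_def by (simp add: if_distrib cong: if_cong)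
  also have "\<dots> = (\<Sum>a\<in>paths L 1 2. \<Prod>j<L.
      R9x q sq z (?X j) (3 * (a ! j - 1) + c' ! j) (3 * (a ! Suc j - 1) + 1))"
    unfolding Tent_def Rent_def R9_eq_R9x by (intro sum.cong prod.cong) auto
  also have "\<dots> = (\<Sum>a\<in>paths L 1 2. (\<Prod>j<L. ?X j - z) *
      (\<Prod>j<L. poly (Rquot q (3 * (a ! j - 1) + c' ! j) (3 * (a ! Suc j - 1) + 1)) (?X j)))"
    using c' by (intro sum.cong prod_R9x_vac_path) auto
  also have "\<dots> = omega z mu L (exp (2 * v)) * Bvac_quot q z mu L v c'"
    unfolding Bvac_quot_def prod_exp_shift_diff sum_distrib_left[symmetric] by (simp add: ac_simps)
  finally show ?thesis .
qed

lemma Bvac_quot_exp2_poly: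
  assumes c': "c' \<in> cfgs L"
  shows "exp2_poly (L - 1) (\<lambda>v. Bvac_quot q z mu L v c')"
  unfolding Bvac_quot_def
proof (intro exp2_poly_cmult exp2_poly_sum)
  fix a assume a: "a \<in> paths L 1 2"
  then have "a ! 0 < a ! L"
    by (simp add: paths_def)
  then obtain j0 where j0: "j0 < L" "a ! j0 < a ! Suc j0"
    by (rule climbing_step)
  let ?Q = "\<lambda>j. Rquot q (3 * (a ! j - 1) + c' ! j) (3 * (a ! Suc j - 1) + 1)"
  have "exp2_poly 0 (\<lambda>t. poly (?Q j0) (exp (2 * (t - mu (Suc j0)))))"
    using j0 a c'
    by (intro exp2_poly_shift[OF refl] degree_Rquot_climbing[THEN eq_imp_le] paths_nth cfgs_nth) auto
  moreover have "exp2_poly (Suc 0) (\<lambda>t. poly (?Q j) (exp (2 * (t - mu (Suc j)))))" for j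
    using degree_Rquot by (intro exp2_poly_shift[OF refl]) simp
  ultimately have "exp2_poly (Suc 0 * L - 1) (\<lambda>t. \<Prod>j<L. poly (?Q j) (exp (2 * (t - mu (Suc j)))))"
    by (intro exp2_poly_prod_one_lower[OF j0(1)])
  then show "exp2_poly (L - 1) (\<lambda>t. \<Prod>j<L. poly (?Q j) (exp (2 * (t - mu (Suc j)))))"
    by simp
qed

lemma opapp_cong: "(\<And>c. c \<in> cfgs L \<Longrightarrow> w c = w' c) \<Longrightarrow> opapp L A w = opapp L A w'"
  unfolding opapp_def by (intro ext sum.cong) auto

lemma opapp_scale: "opapp L A (\<lambda>c. k * w c) = (\<lambda>c'. k * opapp L A w c')"
  unfolding opapp_def by (simp add: sum_distrib_left ac_simps)

lemma fold_opapp_scale: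
  "fold (\<lambda>i w. opapp L (M i) w) xs (\<lambda>c. k * w c) = (\<lambda>c. k * fold (\<lambda>i w. opapp L (M i) w) xs w c)"
  by (induction xs arbitrary: w) (simp_all add: opapp_scale)

lemma exp2_poly_opapp_vector:
  "(\<And>c. c \<in> cfgs L \<Longrightarrow> exp2_poly d (\<lambda>t. w t c)) \<Longrightarrow> exp2_poly d (\<lambda>t. opapp L A (w t) c')"
  unfolding opapp_def by (intro exp2_poly_sum exp2_poly_cmult) auto

lemma exp2_poly_opapp_operator:
  "(\<And>c. c \<in> cfgs L \<Longrightarrow> exp2_poly d (\<lambda>t. A t c' c)) \<Longrightarrow> exp2_poly d (\<lambda>t. opapp L (A t) w c')"
  unfolding opapp_def by (intro exp2_poly_sum exp2_poly_multc) auto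

lemma exp2_poly_fold_opapp:
  "(\<And>c. c \<in> cfgs L \<Longrightarrow> exp2_poly d (\<lambda>t. w t c)) \<Longrightarrow> c \<in> cfgs L \<Longrightarrow>
    exp2_poly d (\<lambda>t. fold (\<lambda>i w. opapp L (M i) w) xs (w t) c)"
proof (induction xs arbitrary: w c)
  case (Cons i xs)
  have "exp2_poly d (\<lambda>t. fold (\<lambda>i w. opapp L (M i) w) xs (opapp L (M i) (w t)) c)"
    using Cons.prems by (intro Cons.IH exp2_poly_opapp_vector) auto
  then show ?case by simp
qed simp

lemma exp2_poly_fold_opapp_update:
  assumes "distinct xs" "i0 \<in> set xs" "c \<in> cfgs L"
    "\<And>c' c. c' \<in> cfgs L \<Longrightarrow> c \<in> cfgs L \<Longrightarrow> exp2_poly d (\<lambda>t. M t c' c)"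
  shows "exp2_poly d (\<lambda>t. fold (\<lambda>i w. opapp L (M ((lam(i0 := t)) i)) w) xs w0 c)"
  using assms
proof (induction xs arbitrary: w0 c)
  case (Cons i xs)
  show ?case
  proof (cases "i = i0")
    case True
    then have "fold (\<lambda>i w. opapp L (M ((lam(i0 := t)) i)) w) xs w =
        fold (\<lambda>i w. opapp L (M (lam i)) w) xs w" for t w
      using Cons.prems(1) by (intro fold_cong) auto
    moreover have "exp2_poly d (\<lambda>t. fold (\<lambda>i w. opapp L (M (lam i)) w) xs (opapp L (M t) w0) c)"
      using Cons.prems by (intro exp2_poly_fold_opapp exp2_poly_opapp_operator) auto
    ultimately show ?thesis
      using True by simp
  next
    case False
    then have "exp2_poly d
        (\<lambda>t. fold (\<lambda>i w. opapp L (M ((lam(i0 := t)) i)) w) xs (opapp L (M (lam i)) w0) c)"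
      using Cons.prems by (intro Cons.IH) auto
    then show ?thesis
      using False by simp
  qed
qed simp

theorem corollary2p4:
  fixes q sq z :: complex and mu :: "nat \<Rightarrow> complex" and L :: nat
  assumes "q \<noteq> 0" and "sq ^ 2 = q" and "z = q \<or> z = - (q ^ 3)" and "L \<ge> 1"
  shows "\<exists>H :: (nat \<Rightarrow> complex) \<Rightarrow> complex \<Rightarrow> complex \<Rightarrow> complex.
     (\<forall>lam v1 v2. Ffun q sq z mu L lam v1 v2 = omega z mu L (exp (2 * v1)) * H lam v1 v2)
   \<and> (\<forall>lam v2. \<exists>p :: complex poly. degree p \<le> L - 1 \<and>
        (\<forall>v1. H lam v1 v2 = poly p (exp (2 * v1))))
   \<and> (\<forall>lam v1. \<exists>p :: complex poly. degree p \<le> 2 * L - 1 \<and>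
        (\<forall>v2. H lam v1 v2 = poly p (exp (2 * v2))))
   \<and> (\<forall>i\<in>{1..<L}. \<forall>lam v1 v2. \<exists>p :: complex poly. degree p \<le> 2 * L - 1 \<and>
        (\<forall>t. H (lam(i := t)) v1 v2 = poly p (exp (2 * t))))"
proof -
  define H where "H lam v1 v2 = fold (\<lambda>i w. opapp L (Eop q sq z mu L (lam i)) w) [1..<L]
      (opapp L (Bop q sq z mu L v2) (Bvac_quot q z mu L v1)) (replicate L 3)" for lam v1 v2
  have dual_vac_cfg: "replicate L 3 \<in> cfgs L"
    by (simp add: replicate_in_cfgs)
  have "Ffun q sq z mu L lam v1 v2 = omega z mu L (exp (2 * v1)) * H lam v1 v2" for lam v1 v2
    unfolding Ffun_def H_def
    by (simp add: opapp_cong[OF Bop_vac] opapp_scale fold_opapp_scale)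
  moreover have "exp2_poly (L - 1) (\<lambda>v1. H lam v1 v2)" for lam v2
    unfolding H_def by (intro exp2_poly_fold_opapp exp2_poly_opapp_vector Bvac_quot_exp2_poly dual_vac_cfg)
  moreover have "exp2_poly (2 * L - 1) (\<lambda>v2. H lam v1 v2)" for lam v1
    unfolding H_def Bop_def
    by (intro exp2_poly_fold_opapp exp2_poly_opapp_operator Tent_exp2_poly dual_vac_cfg) simp_all
  moreover have "exp2_poly (2 * L - 1) (\<lambda>t. H (lam(i := t)) v1 v2)"
    if "i \<in> {1..<L}" for i lam v1 v2
    unfolding H_def Eop_def
    using that dual_vac_cfg by (intro exp2_poly_fold_opapp_update Tent_exp2_poly) simp_all
  ultimately show ?thesis
    unfolding exp2_poly_def by blast
qed

end
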